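(* Fix $p\in(0,1)$. Suppose either (1) $\mathbb P(v\ge x)=L(x)x^{-a}$ for $x\ge0$, with $a>1$ and $L$ slowly varying (i.e. $\lim_{x\to\infty}L(tx)/L(x)=1$ for each $t>0$); or (2) $\mathbb P(v\ge x)=L(x)e^{-\delta x^\beta}$ for $x\ge0$, with $\beta\in(0,1/2)$, $\delta>0$ and $L$ slowly varying. Then $$\lim_{j\to\infty}\left|\frac{\mathbb P(\tilde v\ge j)}{\mathbb P(v\ge j/p)}-1\right|=0 .$$
   Context: Probabilistic model: $(B_n)_{n\ge1}$ is a sequence of i.i.d. Bernoulli random variables with parameter $p$, $v$ is a random variable with values in $\mathbb N$ independent of $(B_n)$, and $\tilde v=\sum_{\ell=1}^v B_\ell$. *)

theory Defs
  imports "HOL-Probability.Probability"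
begin

definition slowly_varying :: "(real \<Rightarrow> real) \<Rightarrow> bool" where
  "slowly_varying L \<longleftrightarrow> (\<forall>t>0. ((\<lambda>x. L (t * x) / L x) \<longlongrightarrow> 1) at_top)"

definition thinned :: "(nat \<Rightarrow> 'a \<Rightarrow> nat) \<Rightarrow> ('a \<Rightarrow> nat) \<Rightarrow> 'a \<Rightarrow> nat" where
  "thinned B v \<omega> = (\<Sum>l\<in>{1..v \<omega>}. B l \<omega>)"

end

theory Submission
  imports Defs "HOL-Real_Asymp.Real_Asymp"
begin

(*
  Let v be independent of i.i.d. Bernoulli(p) trials
  B_1, B_2, ..., put S_m = B_1 + ... + B_m and write q x = P(v >= x), T j = P(S_v >= j).

  With x = j/p, Hoeffding's inequality for S_m and the independence of v from the trials give
    T j >= q (x + w) (1 - exp (-2 (p w)^2 / (x + w + 1)))                    and, splitting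
  {v < x - h} into K windows of width h,
    T j <= q (x - h) + sum_i q (x - (i+1) h) exp (-2 (p i h)^2 / x) + exp (-2 (p (K+1) h)^2 / x).
  For regularly varying q one window of width theta x suffices.  For Weibull-like q the windows
  have width theta x^(1-beta), which is o(x) but large compared with sqrt x since beta < 1/2;
  on them L is controlled by the uniform convergence theorem for slowly varying functions.
*)

lemma measure_lborel_translate:
  fixes F :: "real set"
  assumes "F \<in> sets borel"
  shows "measure lborel {y. y - s \<in> F} = measure lborel F"
proof -
  have "measure lborel F = measure (distr lborel borel ((+) (- s))) F"
    by (simp add: lborel_distr_plus)
  also have "\<dots> = measure lborel ((+) (- s) -` F)"
    using assms by (subst measure_distr) auto
  finally show ?thesis by (simp add: vimage_def)
qed

lemma interval_length_le_shifted_cover: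
  fixes E F :: "real set"
  assumes E: "E \<in> sets borel" "bounded E" and F: "F \<in> sets borel" "bounded F"
    and cd: "c \<le> d" and cover: "{c..d} \<subseteq> E \<union> {y. y - s \<in> F}"
  shows "d - c \<le> measure lborel E + measure lborel F"
proof -
  define P where "P = {y. y - s \<in> F}"
  have P_eq: "P = (\<lambda>y. y + s) ` F"
    by (force simp: P_def image_iff)
  have P: "P \<in> sets borel" "bounded P"
  proof -
    have "(\<lambda>y. y - s) \<in> borel_measurable borel" by measurable
    then have "(\<lambda>y. y - s) -` F \<inter> space borel \<in> sets borel"
      using F(1) by (rule measurable_sets)
    then show "P \<in> sets borel" by (simp add: P_def vimage_def)
    show "bounded P" unfolding P_eq using F(2) by (rule bounded_translation_minus[of _ "- s", simplified])
  qed
  have "E \<union> P \<in> fmeasurable lborel"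
    using E P emeasure_bounded_finite[of "E \<union> P"] by (intro fmeasurableI) auto
  then have "measure lborel {c..d} \<le> measure lborel (E \<union> P)"
    using cover by (intro measure_mono_fmeasurable) (auto simp: P_def)
  also have "\<dots> \<le> measure lborel E + measure lborel P"
    using E P by (intro measure_Un_le) auto
  finally show ?thesis
    using cd measure_lborel_translate[OF F(1), of s] by (simp add: P_def)
qed

lemma exceptional_set_measure_vanishes:
  fixes f :: "real \<Rightarrow> real" and W :: "nat \<Rightarrow> real"
  assumes f: "f \<in> borel_measurable borel"
    and lim: "\<And>y. ((\<lambda>u. f (u + y) - f u) \<longlongrightarrow> 0) at_top"
    and W: "filterlim W at_top sequentially" and \<epsilon>: "\<epsilon> > 0"
  shows "(\<lambda>m. measure lborel {y\<in>{a..b}. \<exists>n\<ge>m. \<epsilon> \<le> \<bar>f (W n + y) - f (W n)\<bar>}) \<longlonglongrightarrow> 0"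
proof -
  define E where "E m = {y\<in>{a..b}. \<exists>n\<ge>m. \<epsilon> \<le> \<bar>f (W n + y) - f (W n)\<bar>}" for m
  have E_sets: "range E \<subseteq> sets lborel"
    unfolding E_def using f by auto
  have E_dec: "decseq E"
    unfolding decseq_def E_def by (blast intro: order_trans)
  have E_fin: "emeasure lborel (E m) \<noteq> \<infinity>" for m
  proof -
    have "emeasure lborel (E m) \<le> emeasure lborel {a..b}"
      by (rule emeasure_mono) (auto simp: E_def)
    then show ?thesis by (auto simp: top_unique emeasure_lborel_Icc_eq)
  qed
  have "(\<Inter>m. E m) = {}"
  proof safe
    fix y assume y: "y \<in> (\<Inter>m. E m)"
    have "(\<lambda>n. f (W n + y) - f (W n)) \<longlonglongrightarrow> 0"
      using filterlim_compose[OF lim[of y] W] by simp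
    then have "eventually (\<lambda>n. \<bar>f (W n + y) - f (W n)\<bar> < \<epsilon>) sequentially"
      using \<epsilon> by (auto simp: tendsto_iff dist_real_def)
    then obtain m where "\<And>n. n \<ge> m \<Longrightarrow> \<bar>f (W n + y) - f (W n)\<bar> < \<epsilon>"
      by (auto simp: eventually_sequentially)
    moreover have "y \<in> E m" using y by auto
    ultimately show "y \<in> {}" by (force simp: E_def)
  qed
  moreover have "(\<lambda>m. measure lborel (E m)) \<longlonglongrightarrow> measure lborel (\<Inter>m. E m)"
    using E_sets E_dec E_fin by (rule Lim_measure_decseq)
  ultimately show ?thesis by (simp add: E_def)
qed

(* A sequence of counterexamples would make [S, S + 2] a union of two small exceptional sets. *)
theorem uniform_convergence_additive:
  fixes f :: "real \<Rightarrow> real"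
  assumes f: "f \<in> borel_measurable borel"
    and lim: "\<And>y. ((\<lambda>u. f (u + y) - f u) \<longlongrightarrow> 0) at_top"
    and \<epsilon>: "\<epsilon> > 0"
  shows "eventually (\<lambda>u. \<forall>s\<in>{0..1}. \<bar>f (u + s) - f u\<bar> < \<epsilon>) at_top"
proof (rule ccontr)
  assume "\<not> ?thesis"
  then have "\<forall>N. \<exists>u\<ge>N. \<exists>s\<in>{0..1}. \<epsilon> \<le> \<bar>f (u + s) - f u\<bar>"
    by (auto simp: eventually_at_top_linorder not_less)
  then have "\<forall>n::nat. \<exists>u s. real n \<le> u \<and> s \<in> {0..1} \<and> \<epsilon> \<le> \<bar>f (u + s) - f u\<bar>"
    by blast
  then obtain U S where U: "\<And>n. real n \<le> U n" and S: "\<And>n. S n \<in> {0..1}"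
    and bad: "\<And>n. \<epsilon> \<le> \<bar>f (U n + S n) - f (U n)\<bar>"
    by metis
  have U_lim: "filterlim U at_top sequentially"
    by (rule filterlim_at_top_mono[OF filterlim_real_sequentially]) (use U in auto)
  have US_lim: "filterlim (\<lambda>n. U n + S n) at_top sequentially"
    by (rule filterlim_at_top_mono[OF U_lim]) (use S in auto)
  define E where "E m = {y\<in>{0..3}. \<exists>n\<ge>m. \<epsilon>/2 \<le> \<bar>f (U n + y) - f (U n)\<bar>}" for m
  define F where "F m = {y\<in>{0..3}. \<exists>n\<ge>m. \<epsilon>/2 \<le> \<bar>f (U n + S n + y) - f (U n + S n)\<bar>}" for m
  have "eventually (\<lambda>m. measure lborel (E m) < 1/2) sequentially"
    using exceptional_set_measure_vanishes[OF f lim U_lim, of "\<epsilon>/2"] \<epsilon>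
    unfolding E_def by (intro order_tendstoD) auto
  moreover have "eventually (\<lambda>m. measure lborel (F m) < 1/2) sequentially"
    using exceptional_set_measure_vanishes[OF f lim US_lim, of "\<epsilon>/2"] \<epsilon>
    unfolding F_def by (intro order_tendstoD) auto
  ultimately have "eventually (\<lambda>m. measure lborel (E m) < 1/2 \<and> measure lborel (F m) < 1/2) sequentially"
    by (rule eventually_conj)
  then obtain m where small: "measure lborel (E m) < 1/2" "measure lborel (F m) < 1/2"
    by (auto simp: eventually_sequentially)
  \<comment> \<open>every point of \<open>[S m, S m + 2]\<close> is exceptional for \<open>U\<close> or, after the shift, for \<open>U + S\<close>\<close>
  have "{S m..S m + 2} \<subseteq> E m \<union> {y. y - S m \<in> F m}"
  proof (rule subsetI, rule ccontr)
    fix y assume y: "y \<in> {S m..S m + 2}" and "y \<notin> E m \<union> {y. y - S m \<in> F m}"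
    then have "\<bar>f (U m + y) - f (U m)\<bar> < \<epsilon>/2"
      and "\<bar>f (U m + S m + (y - S m)) - f (U m + S m)\<bar> < \<epsilon>/2"
      using S[of m] by (auto simp: E_def F_def not_le)
    then show False using bad[of m] by (simp add: abs_if split: if_splits)
  qed
  moreover have "E m \<in> sets borel" "F m \<in> sets borel"
    unfolding E_def F_def using f by auto
  moreover have "bounded (E m)" "bounded (F m)"
    by (rule bounded_subset[of "{0..3}"]; force simp: E_def F_def)+
  ultimately have "2 \<le> measure lborel (E m) + measure lborel (F m)"
    using interval_length_le_shifted_cover[of "E m" "F m" "S m" "S m + 2"] by simp
  with small show False by simp
qed

definition dyadically_stable :: "(real \<Rightarrow> real) \<Rightarrow> real \<Rightarrow> real \<Rightarrow> bool" where
  "dyadically_stable L \<eta> x \<longleftrightarrow> (\<forall>y. x/2 \<le> y \<and> y \<le> 2*x \<longrightarrow> \<bar>ln (L y) - ln (L x)\<bar> < \<eta>)"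

lemma slowly_varying_log_shift:
  fixes L :: "real \<Rightarrow> real"
  assumes SV: "slowly_varying L" and L_pos: "\<And>x. 0 < x \<Longrightarrow> 0 < L x"
  shows "((\<lambda>u. ln (L (exp (u + s))) - ln (L (exp u))) \<longlongrightarrow> 0) at_top"
proof -
  have "((\<lambda>x. ln (L (exp s * x) / L x)) \<longlongrightarrow> ln 1) at_top"
    using SV unfolding slowly_varying_def by (intro tendsto_intros) auto
  then have "((\<lambda>u. ln (L (exp s * exp u) / L (exp u))) \<longlongrightarrow> 0) at_top"
    using filterlim_compose exp_at_top by fastforce
  moreover have "ln (L (exp s * exp u) / L (exp u)) = ln (L (exp (u + s))) - ln (L (exp u))" for u
    using L_pos[of "exp u"] L_pos[of "exp s * exp u"] by (simp add: ln_div exp_add mult.commute)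
  ultimately show ?thesis by simp
qed

lemma slowly_varying_uniform:
  fixes L :: "real \<Rightarrow> real"
  assumes SV: "slowly_varying L" and L_pos: "\<And>x. 0 < x \<Longrightarrow> 0 < L x"
    and meas: "(\<lambda>u. ln (L (exp u))) \<in> borel_measurable borel" and \<eta>: "0 < \<eta>"
  shows "eventually (dyadically_stable L \<eta>) at_top"
proof -
  define f where "f u = ln (L (exp u))" for u
  have lim: "((\<lambda>u. f (u + s) - f u) \<longlongrightarrow> 0) at_top" for s
    unfolding f_def using SV L_pos by (rule slowly_varying_log_shift)
  have "eventually (\<lambda>u. \<forall>s\<in>{0..1}. \<bar>f (u + s) - f u\<bar> < \<eta>) at_top"
    using meas by (intro uniform_convergence_additive lim \<eta>) (simp add: f_def[abs_def])
  then obtain U0 where U0: "\<forall>u\<ge>U0. \<forall>s\<in>{0..1}. \<bar>f (u + s) - f u\<bar> < \<eta>"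
    by (auto simp: eventually_at_top_linorder)
  \<comment> \<open>in logarithmic coordinates, a ratio \<open>z/y \<in> [1, 2]\<close> is a shift by at most \<open>ln 2 < 1\<close>\<close>
  have close: "\<bar>ln (L z) - ln (L y)\<bar> < \<eta>" if y: "exp U0 \<le> y" and yz: "y \<le> z" "z \<le> 2*y" for y z
  proof -
    have "0 < y" using y by (smt (verit) exp_gt_zero)
    have "U0 \<le> ln y" using y \<open>0 < y\<close> by (simp add: ln_ge_iff)
    moreover have "ln z \<le> ln (2 * y)" using \<open>0 < y\<close> yz by simp
    then have "ln z \<le> ln 2 + ln y" using \<open>0 < y\<close> by (simp add: ln_mult)
    moreover have "ln y \<le> ln z" using \<open>0 < y\<close> yz by simp
    ultimately have "U0 \<le> ln y" "0 \<le> ln z - ln y" "ln z - ln y \<le> ln 2" by auto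
    then have "\<bar>f (ln y + (ln z - ln y)) - f (ln y)\<bar> < \<eta>"
      using U0[rule_format, of "ln y" "ln z - ln y"] ln_2_less_1 by auto
    then show ?thesis using \<open>0 < y\<close> yz by (simp add: f_def)
  qed
  show ?thesis
    unfolding eventually_at_top_linorder dyadically_stable_def
  proof (intro exI[of _ "2 * exp U0"] allI impI)
    fix x y assume x: "2 * exp U0 \<le> x" and y: "x/2 \<le> y \<and> y \<le> 2*x"
    show "\<bar>ln (L y) - ln (L x)\<bar> < \<eta>"
    proof (cases "y \<le> x")
      case True
      then show ?thesis using close[of y x] x y by (simp add: abs_minus_commute)
    next
      case False
      then show ?thesis using close[of x y] x y by simp
    qed
  qed
qed

lemma dyadic_chain:
  fixes g :: "real \<Rightarrow> real"
  assumes step: "\<And>x y. X \<le> x \<Longrightarrow> x \<le> y \<Longrightarrow> y \<le> 2*x \<Longrightarrow> g x - \<eta> \<le> g y"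
    and \<eta>: "0 \<le> \<eta>" and X: "0 < X"
  shows "X \<le> y \<Longrightarrow> y \<le> 2^k * X \<Longrightarrow> g X - real k * \<eta> \<le> g y"
proof (induction k arbitrary: y)
  case 0
  then show ?case by simp
next
  case (Suc k)
  show ?case
  proof (cases "y \<le> 2^k * X")
    case True
    then have "g X - real k * \<eta> \<le> g y" using Suc.IH Suc.prems by simp
    moreover have "real (Suc k) * \<eta> = real k * \<eta> + \<eta>" by (simp add: algebra_simps)
    ultimately show ?thesis using \<eta> by linarith
  next
    case False
    define x where "x = max X (y/2)"
    have "X \<le> x" "x \<le> 2^k * X" "x \<le> y" "y \<le> 2*x"
      using Suc.prems X False by (auto simp: x_def)
    then have "g X - real k * \<eta> \<le> g x" and "g x - \<eta> \<le> g y"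
      using Suc.IH step by auto
    then show ?thesis by (simp add: algebra_simps)
  qed
qed

lemma linear_lower_bound_from_dyadic:
  fixes g :: "real \<Rightarrow> real"
  assumes \<eta>: "0 \<le> \<eta>"
    and dyadic: "eventually (\<lambda>x. \<forall>y. x \<le> y \<and> y \<le> 2*x \<longrightarrow> g x - \<eta> \<le> g y) at_top"
    and \<kappa>: "0 < \<kappa>"
  shows "eventually (\<lambda>y. -\<kappa> * y \<le> g y) at_top"
proof -
  obtain X0 where X0: "\<And>x y. X0 \<le> x \<Longrightarrow> x \<le> y \<Longrightarrow> y \<le> 2*x \<Longrightarrow> g x - \<eta> \<le> g y"
    using dyadic by (auto simp: eventually_at_top_linorder)
  define X where "X = max (max X0 1) (2 * \<eta> / \<kappa>)"
  have "2 * \<eta> / \<kappa> \<le> X" by (simp add: X_def)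
  then have "2 * \<eta> \<le> \<kappa> * X"
    using \<kappa> by (simp add: pos_divide_le_eq mult.commute)
  moreover have "1 \<le> X" "X0 \<le> X" by (auto simp: X_def)
  ultimately have X: "1 \<le> X" "X0 \<le> X" "2 * \<eta> \<le> \<kappa> * X" by auto
  have chain: "g X - real k * \<eta> \<le> g y" if "X \<le> y" "y \<le> 2^k * X" for k y
    using X0 X \<eta> that by (intro dyadic_chain[of X g \<eta>]) auto
  \<comment> \<open>\<open>k = \<lceil>y/X\<rceil>\<close> doublings suffice, which costs at most \<open>(y/X + 1) \<eta> \<le> \<eta> + \<kappa> y / 2\<close>\<close>
  have linear: "g X - \<eta> - \<kappa>/2 * y \<le> g y" if y: "X \<le> y" for y
  proof -
    define k where "k = nat \<lceil>y / X\<rceil>"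
    have k: "y / X \<le> real k" "real k \<le> y / X + 1"
      using X y by (auto simp: k_def)
    have "real k \<le> 2 ^ k" using less_exp[of k] by (metis of_nat_le_iff of_nat_numeral of_nat_power less_imp_le)
    have "y \<le> real k * X" using k X by (simp add: divide_le_eq)
    also have "\<dots> \<le> 2^k * X" using \<open>real k \<le> 2 ^ k\<close> X by (intro mult_right_mono) auto
    finally have "y \<le> 2^k * X" .
    then have "g X - real k * \<eta> \<le> g y" using chain y by blast
    moreover have "real k * \<eta> \<le> \<eta> + \<kappa>/2 * y"
    proof -
      have "real k * \<eta> \<le> (y / X + 1) * \<eta>" using k \<eta> by (intro mult_right_mono) auto
      also have "\<dots> = y * (\<eta> / X) + \<eta>" by (simp add: algebra_simps)
      also have "\<dots> \<le> y * (\<kappa> / 2) + \<eta>"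
        using X y by (intro add_right_mono mult_left_mono) (auto simp: divide_le_eq)
      finally show ?thesis by (simp add: mult.commute)
    qed
    ultimately show ?thesis by linarith
  qed
  have "eventually (\<lambda>y. max X (2 * (\<eta> - g X) / \<kappa>) \<le> y) at_top"
    by (rule eventually_ge_at_top)
  then show ?thesis
  proof eventually_elim
    case (elim y)
    then have "\<eta> - g X \<le> \<kappa>/2 * y"
      using \<kappa> by (simp add: pos_divide_le_eq mult.commute)
    then show ?case using linear[of y] elim by simp
  qed
qed

lemma exp_dominated_by_dyadic_stable:
  fixes g :: "real \<Rightarrow> real"
  assumes pos: "eventually (\<lambda>x. 0 < g x) at_top" and \<eta>: "0 \<le> \<eta>"
    and dyadic: "eventually (\<lambda>x. \<forall>y. x \<le> y \<and> y \<le> 2*x \<longrightarrow> ln (g x) - \<eta> \<le> ln (g y)) at_top"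
    and c: "0 < c" and e: "0 < e"
  shows "eventually (\<lambda>x. exp (- c * x) \<le> e * g x) at_top"
proof -
  have "eventually (\<lambda>x. - (c/2) * x \<le> ln (g x)) at_top"
    using c by (intro linear_lower_bound_from_dyadic[OF \<eta> dyadic]) simp
  moreover have "eventually (\<lambda>x. exp (- (c/2) * x) \<le> e) at_top"
    using c e by real_asymp
  ultimately show ?thesis using pos
  proof eventually_elim
    case (elim x)
    have "exp (- (c/2) * x) \<le> g x"
      using elim by (metis exp_le_cancel_iff exp_ln)
    then have "exp (- (c/2) * x) * exp (- (c/2) * x) \<le> e * g x"
      using elim e by (intro mult_mono) auto
    then show ?case by (simp flip: exp_add)
  qed
qed

lemma powr_increment_le:
  fixes a b \<beta> :: real
  assumes a: "0 < a" and ab: "a \<le> b" and \<beta>: "0 \<le> \<beta>" "\<beta> \<le> 1"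
  shows "b powr \<beta> - a powr \<beta> \<le> (b - a) * a powr (\<beta> - 1)"
proof -
  define t where "t = b / a"
  have t: "1 \<le> t" "b = a * t" using a ab by (auto simp: t_def)
  have "t powr \<beta> \<le> t powr 1" using \<beta> t by (intro powr_mono) auto
  then have "t powr \<beta> \<le> t" using t by simp
  have "b powr \<beta> - a powr \<beta> = a powr \<beta> * (t powr \<beta> - 1)"
    using a t by (simp add: powr_mult algebra_simps)
  also have "\<dots> \<le> a powr \<beta> * (t - 1)"
    using \<open>t powr \<beta> \<le> t\<close> by (intro mult_left_mono) auto
  also have "\<dots> = (b - a) * a powr (\<beta> - 1)"
    using a t by (simp add: powr_diff field_simps)
  finally show ?thesis .
qed

lemma powr_decrement_le:
  fixes x k \<beta> :: real
  assumes x: "0 < x" and k: "0 \<le> k" "k \<le> x/2" and \<beta>: "0 \<le> \<beta>" "\<beta> \<le> 1"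
  shows "x powr \<beta> - (x - k) powr \<beta> \<le> 2 * k * x powr (\<beta> - 1)"
proof -
  have "(x - k) powr (\<beta> - 1) \<le> (x/2) powr (\<beta> - 1)"
    using x k \<beta> by (intro powr_mono2') auto
  also have "\<dots> = x powr (\<beta> - 1) / 2 powr (\<beta> - 1)"
    by (rule powr_divide)
  also have "\<dots> \<le> x powr (\<beta> - 1) / (1/2)"
  proof (rule divide_left_mono)
    have "2 powr (-1) \<le> 2 powr (\<beta> - 1)" using \<beta> by (intro powr_mono) auto
    then show "1/2 \<le> 2 powr (\<beta> - 1)" by (simp add: powr_minus)
  qed auto
  finally have "k * (x - k) powr (\<beta> - 1) \<le> k * (2 * x powr (\<beta> - 1))"
    using k by (intro mult_left_mono) auto
  moreover have "x powr \<beta> - (x - k) powr \<beta> \<le> k * (x - k) powr (\<beta> - 1)"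
    using powr_increment_le[of "x - k" x \<beta>] x k \<beta> by simp
  ultimately show ?thesis by simp
qed

lemma geometric_sum_le:
  fixes r :: real
  assumes "0 \<le> r" "r \<le> 1/2"
  shows "(\<Sum>i\<in>{1..K}. r ^ i) \<le> 2 * r"
proof -
  have "(\<Sum>i\<in>{1..K}. r ^ i) \<le> 2 * r - 2 * r ^ (K+1)"
  proof (induction K)
    case (Suc K)
    have "2 * r ^ (K + 2) \<le> r ^ (K+1)"
      using assms mult_right_mono[of "2 * r" 1 "r ^ (K+1)"] by simp
    then show ?case using Suc by simp
  qed simp
  moreover have "0 \<le> r ^ (K+1)" using assms by simp
  ultimately show ?thesis by linarith
qed

lemma window_count_exists:
  fixes x h :: real
  assumes h: "0 < h" "h \<le> x/8"
  obtains K :: nat where "x/4 \<le> real (K+1) * h" "real (K+1) * h \<le> x/2"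
proof
  define N where "N = \<lfloor>x / (2 * h)\<rfloor>"
  have "4 \<le> x / (2 * h)" using h by (simp add: field_simps)
  then have N: "4 \<le> N" "real_of_int N \<le> x / (2*h)" "x / (2*h) < real_of_int N + 1"
    by (auto simp: N_def le_floor_iff)
  have K: "real (nat N - 1 + 1) = real_of_int N" using N by simp
  have "(x / (2*h) - 1) * h \<le> real_of_int N * h" using N h by (intro mult_right_mono) auto
  then show "x/4 \<le> real (nat N - 1 + 1) * h" using h K by (simp add: algebra_simps)
  have "real_of_int N * h \<le> x / (2*h) * h" using N h by (intro mult_right_mono) auto
  then show "real (nat N - 1 + 1) * h \<le> x/2" using h K by simp
qed

lemma gaussian_factor_le:
  fixes x H p :: real
  assumes x: "0 < x" and H: "x/4 \<le> H"
  shows "exp (-2 * (p * H)\<^sup>2 / x) \<le> exp (- (p\<^sup>2/8) * x)"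
proof -
  have "(x/4)\<^sup>2 \<le> H\<^sup>2" using x H by (intro power_mono) auto
  then have "p\<^sup>2 * (x/4)\<^sup>2 / x \<le> p\<^sup>2 * H\<^sup>2 / x"
    using x by (intro divide_right_mono mult_left_mono) auto
  moreover have "p\<^sup>2 * (x/4)\<^sup>2 / x = (p\<^sup>2/16) * x" using x by (simp add: power2_eq_square)
  moreover have "-2 * (p * H)\<^sup>2 / x = -2 * (p\<^sup>2 * H\<^sup>2 / x)"
    by (simp add: power_mult_distrib)
  ultimately have "-2 * (p * H)\<^sup>2 / x \<le> - (p\<^sup>2/8) * x" by linarith
  then show ?thesis by simp
qed

lemma le_exp_mult_if_ln_le:
  fixes a b s :: real
  assumes "0 < a" "0 < b" "ln a \<le> ln b + s"
  shows "a \<le> exp s * b"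
proof -
  have "exp (ln a) \<le> exp (ln b + s)"
    using assms(3) by (simp only: exp_le_cancel_iff)
  then show ?thesis using assms by (simp add: exp_add mult.commute)
qed

lemma window_scaling:
  fixes x \<theta> \<beta> c :: real
  assumes "0 < x"
  shows "\<theta> * x powr (1 - \<beta>) * x powr (\<beta> - 1) = \<theta>"
    and "(c * (\<theta> * x powr (1 - \<beta>)))\<^sup>2 / x = c\<^sup>2 * \<theta>\<^sup>2 * x powr (1 - 2 * \<beta>)"
proof -
  have "x powr (1 - \<beta>) * x powr (\<beta> - 1) = x powr ((1 - \<beta>) + (\<beta> - 1))"
    by (rule powr_add[symmetric])
  also have "\<dots> = 1" using assms by simp
  finally show "\<theta> * x powr (1 - \<beta>) * x powr (\<beta> - 1) = \<theta>" by (simp add: mult.assoc)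
  have "(x powr (1 - \<beta>))\<^sup>2 = x powr ((1 - \<beta>) + (1 - \<beta>))"
    by (simp add: power2_eq_square powr_add[symmetric])
  also have "(1 - \<beta>) + (1 - \<beta>) = (1 - 2 * \<beta>) + 1" by simp
  also have "x powr ((1 - 2 * \<beta>) + 1) = x powr (1 - 2 * \<beta>) * x"
    by (subst powr_add) (use assms in simp)
  finally have "(x powr (1 - \<beta>))\<^sup>2 / x = x powr (1 - 2 * \<beta>)"
    using assms by simp
  moreover have "(c * (\<theta> * x powr (1 - \<beta>)))\<^sup>2 / x = c\<^sup>2 * \<theta>\<^sup>2 * ((x powr (1 - \<beta>))\<^sup>2 / x)"
    by (simp add: power_mult_distrib)
  ultimately show "(c * (\<theta> * x powr (1 - \<beta>)))\<^sup>2 / x = c\<^sup>2 * \<theta>\<^sup>2 * x powr (1 - 2 * \<beta>)"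
    by simp
qed

lemma obtain_small_positive:
  assumes "eventually P (at_right (0::real))"
  obtains t where "0 < t" "t < 1" "P t"
proof -
  obtain b where "0 < b" and b: "\<And>t. 0 < t \<Longrightarrow> t < b \<Longrightarrow> P t"
    using assms unfolding eventually_at_right_field by auto
  then show ?thesis using that[of "min (b/2) (1/2)"] by auto
qed

(* The two tail comparisons satisfied by q x = P(v >= x) and T j = P(thinned >= j),
   with x = j/p: a window decomposition from above and a single shift from below. *)
locale tail_comparison =
  fixes q :: "real \<Rightarrow> real" and T :: "nat \<Rightarrow> real" and p :: real
  assumes p_pos: "0 < p"
    and q_nonneg: "\<And>x. 0 \<le> q x"
    and q_antimono: "\<And>x y. x \<le> y \<Longrightarrow> q y \<le> q x"
    and upper: "\<And>j x h K. 0 < x \<Longrightarrow> 0 < h \<Longrightarrow> real j = p * x \<Longrightarrow> real (K+1) * h \<le> x \<Longrightarrow>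
       T j \<le> q (x - h)
             + (\<Sum>i\<in>{1..K}. q (x - real (i+1) * h) * exp (-2 * (p * (real i * h))\<^sup>2 / x))
             + exp (-2 * (p * (real (K+1) * h))\<^sup>2 / x)"
    and lower: "\<And>j x w. 0 < x \<Longrightarrow> 0 < w \<Longrightarrow> real j = p * x \<Longrightarrow>
       q (x + w) * (1 - exp (-2 * (p * w)\<^sup>2 / (x + w + 1))) \<le> T j"
begin

(* A slowly varying factor cannot vanish, so the antitone function q is positive. *)
lemma q_pos_if_slowly_varying_factor:
  assumes SV: "slowly_varying L"
    and factor: "\<And>x. x0 \<le> x \<Longrightarrow> q x = L x * g x" and g_pos: "\<And>x. x0 \<le> x \<Longrightarrow> 0 < g x"
  shows "0 < q x"
proof (rule ccontr)
  assume "\<not> 0 < q x"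
  then have "q y = 0" if "x \<le> y" for y
    using q_antimono[OF that] q_nonneg[of y] by linarith
  then have "L y = 0" if "max x x0 \<le> y" for y
    using factor[of y] g_pos[of y] that by auto
  then have "eventually (\<lambda>y. L (2 * y) / L y = 0) at_top"
    unfolding eventually_at_top_linorder by (intro exI[of _ "max x x0"]) auto
  then have "((\<lambda>y. L (2 * y) / L y) \<longlongrightarrow> 0) at_top"
    by (rule tendsto_eventually)
  moreover have "((\<lambda>y. L (2 * y) / L y) \<longlongrightarrow> 1) at_top"
    using SV by (simp add: slowly_varying_def)
  ultimately show False
    using tendsto_unique[of "at_top :: real filter"] by fastforce
qed

lemma single_window_upper:
  assumes "0 < h" "h \<le> x" "real j = p * x"
  shows "T j \<le> q (x - h) + exp (-2 * (p * h)\<^sup>2 / x)"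
  using upper[of x h j 0] assms by simp

lemma lower_from_relative_bounds:
  assumes x: "1 \<le> x" and w: "0 < w" "w \<le> x" and j: "real j = p * x"
    and \<epsilon>: "0 \<le> \<epsilon>" "\<epsilon> \<le> 1"
    and shift: "(1 - \<epsilon>) * q x \<le> q (x + w)"
    and concentration: "exp (-2 * (p * w)\<^sup>2 / (3 * x)) \<le> \<epsilon>"
  shows "(1 - 2 * \<epsilon>) * q x \<le> T j"
proof -
  have "(p * w)\<^sup>2 / (3 * x) \<le> (p * w)\<^sup>2 / (x + w + 1)"
    using x w by (intro divide_left_mono) auto
  then have "exp (-2 * (p * w)\<^sup>2 / (x + w + 1)) \<le> exp (-2 * (p * w)\<^sup>2 / (3 * x))"
    by simp
  then have "exp (-2 * (p * w)\<^sup>2 / (x + w + 1)) \<le> \<epsilon>"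
    using concentration by linarith
  then have "(1 - \<epsilon>) * q x * (1 - \<epsilon>) \<le> q (x + w) * (1 - exp (-2 * (p * w)\<^sup>2 / (x + w + 1)))"
    using shift \<epsilon> q_nonneg[of x] q_nonneg[of "x + w"] by (intro mult_mono) auto
  moreover have "(1 - 2 * \<epsilon>) * q x \<le> (1 - \<epsilon>) * q x * (1 - \<epsilon>)"
  proof -
    have "(1 - 2 * \<epsilon>) * q x \<le> (1 - 2 * \<epsilon>) * q x + \<epsilon>\<^sup>2 * q x"
      using q_nonneg[of x] by simp
    also have "\<dots> = (1 - \<epsilon>) * q x * (1 - \<epsilon>)" by (simp add: algebra_simps power2_eq_square)
    finally show ?thesis .
  qed
  ultimately show ?thesis using lower[of x w j] x w j by linarith
qed

lemma ratio_tendsto_one: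
  assumes q_pos: "\<And>x. 0 < q x"
    and upper_rel: "\<And>\<epsilon>. 0 < \<epsilon> \<Longrightarrow> \<epsilon> \<le> 1 \<Longrightarrow>
      eventually (\<lambda>x. \<forall>j. real j = p * x \<longrightarrow> T j \<le> (1 + \<epsilon>) * q x) at_top"
    and lower_rel: "\<And>\<epsilon>. 0 < \<epsilon> \<Longrightarrow> \<epsilon> \<le> 1 \<Longrightarrow>
      eventually (\<lambda>x. \<forall>j. real j = p * x \<longrightarrow> (1 - \<epsilon>) * q x \<le> T j) at_top"
  shows "(\<lambda>j. \<bar>T j / q (real j / p) - 1\<bar>) \<longlonglongrightarrow> 0"
  unfolding tendsto_iff dist_real_def
proof (intro allI impI)
  fix \<epsilon> :: real assume \<epsilon>: "0 < \<epsilon>"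
  define \<epsilon>' where "\<epsilon>' = min (\<epsilon>/2) 1"
  have lim: "filterlim (\<lambda>j. real j / p) at_top sequentially"
    using p_pos by real_asymp
  have "0 < \<epsilon>'" "\<epsilon>' \<le> 1" using \<epsilon> by (auto simp: \<epsilon>'_def)
  then have "eventually (\<lambda>x. (\<forall>j. real j = p * x \<longrightarrow> T j \<le> (1 + \<epsilon>') * q x) \<and>
      (\<forall>j. real j = p * x \<longrightarrow> (1 - \<epsilon>') * q x \<le> T j)) at_top"
    by (intro eventually_conj upper_rel lower_rel)
  then have "eventually (\<lambda>x. \<forall>j. real j = p * x \<longrightarrow> \<bar>T j - q x\<bar> \<le> \<epsilon>' * q x) at_top"
    by eventually_elim (auto simp: abs_le_iff algebra_simps)
  from lim[unfolded filterlim_iff, rule_format, OF this]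
  have "eventually (\<lambda>j. \<forall>i. real i = p * (real j / p) \<longrightarrow>
      \<bar>T i - q (real j / p)\<bar> \<le> \<epsilon>' * q (real j / p)) sequentially" .
  then show "eventually (\<lambda>j. \<bar>\<bar>T j / q (real j / p) - 1\<bar> - 0\<bar> < \<epsilon>) sequentially"
  proof eventually_elim
    case (elim j)
    define Q where "Q = q (real j / p)"
    have Q: "0 < Q" using q_pos by (simp add: Q_def)
    have close: "\<bar>T j - Q\<bar> \<le> \<epsilon>' * Q" using elim p_pos by (simp add: Q_def)
    have "T j / Q - 1 = (T j - Q) / Q" using Q by (simp add: field_simps)
    then have "\<bar>T j / Q - 1\<bar> = \<bar>T j - Q\<bar> / Q" using Q by simp
    also have "\<dots> \<le> \<epsilon>'" using close Q by (simp add: divide_le_eq)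
    finally show ?case using \<epsilon> by (simp add: \<epsilon>'_def Q_def)
  qed
qed

end

locale thinning = prob_space M for M :: "'a measure" +
  fixes B :: "nat \<Rightarrow> 'a \<Rightarrow> nat" and v :: "'a \<Rightarrow> nat" and p :: real
  assumes p_pos: "0 < p"
    and indep: "indep_vars (\<lambda>_. count_space UNIV)
                  (\<lambda>i. case i of None \<Rightarrow> v | Some n \<Rightarrow> B n) (UNIV :: nat option set)"
    and bern_vals: "\<And>n \<omega>. n \<ge> 1 \<Longrightarrow> \<omega> \<in> space M \<Longrightarrow> B n \<omega> \<in> {0, 1}"
    and bern_p: "\<And>n. n \<ge> 1 \<Longrightarrow> measure M {\<omega> \<in> space M. B n \<omega> = 1} = p"
begin

definition Y :: "nat option \<Rightarrow> 'a \<Rightarrow> nat" where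
  "Y i = (case i of None \<Rightarrow> v | Some n \<Rightarrow> B n)"

definition S :: "nat \<Rightarrow> 'a \<Rightarrow> nat" where
  "S m \<omega> = (\<Sum>l\<in>{1..m}. B l \<omega>)"

definition q :: "real \<Rightarrow> real" where
  "q y = prob {\<omega> \<in> space M. y \<le> real (v \<omega>)}"

definition T :: "nat \<Rightarrow> real" where
  "T j = prob {\<omega> \<in> space M. j \<le> thinned B v \<omega>}"

lemma indep_Y: "indep_vars (\<lambda>_. count_space UNIV) Y UNIV"
  using indep unfolding Y_def[abs_def] .

lemma measurable_Y: "Y i \<in> measurable M (count_space UNIV)"
  using indep_Y unfolding indep_vars_def by auto

lemma measurable_v[measurable]: "v \<in> measurable M (count_space UNIV)"
  using measurable_Y[of None] by (simp add: Y_def)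

lemma measurable_B[measurable]: "B n \<in> measurable M (count_space UNIV)"
  using measurable_Y[of "Some n"] by (simp add: Y_def)

lemma measurable_S[measurable]: "S m \<in> measurable M (count_space UNIV)"
  unfolding S_def[abs_def] by measurable

lemma thinned_eq_S: "thinned B v \<omega> = S (v \<omega>) \<omega>"
  by (simp add: thinned_def S_def)

lemma measurable_thinned[measurable]: "thinned B v \<in> measurable M (count_space UNIV)"
proof -
  have "(\<lambda>\<omega>. S (v \<omega>) \<omega>) \<in> measurable M (count_space UNIV)" by measurable
  then show ?thesis by (simp add: thinned_eq_S[abs_def])
qed

lemma S_mono: "m \<le> m' \<Longrightarrow> S m \<omega> \<le> S m' \<omega>"
  unfolding S_def by (rule sum_mono2) auto

lemma expectation_B: "l \<ge> 1 \<Longrightarrow> expectation (\<lambda>\<omega>. real (B l \<omega>)) = p"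
proof -
  assume l: "l \<ge> 1"
  have "expectation (\<lambda>\<omega>. real (B l \<omega>)) = expectation (indicator {\<omega> \<in> space M. B l \<omega> = 1})"
    by (rule Bochner_Integration.integral_cong[OF refl])
       (use bern_vals[OF l] in \<open>auto simp: indicator_def\<close>)
  also have "\<dots> = prob {\<omega> \<in> space M. B l \<omega> = 1}"
    by (simp add: Int_absorb2 subset_eq)
  finally show ?thesis using bern_p[OF l] by simp
qed

lemma hoeffding_S:
  assumes m: "m \<ge> 1" and \<epsilon>: "\<epsilon> \<ge> 0"
  shows "prob {\<omega> \<in> space M. m * p + \<epsilon> \<le> real (S m \<omega>)} \<le> exp (-2 * \<epsilon>\<^sup>2 / m)"
    and "prob {\<omega> \<in> space M. real (S m \<omega>) \<le> m * p - \<epsilon>} \<le> exp (-2 * \<epsilon>\<^sup>2 / m)"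
proof -
  define I where "I = Some ` {1..m}"
  interpret H: Hoeffding_ineq M I "\<lambda>i \<omega>. real (Y i \<omega>)" "\<lambda>_. 0" "\<lambda>_. 1"
    "\<Sum>i\<in>I. expectation (\<lambda>\<omega>. real (Y i \<omega>))"
  proof unfold_locales
    show "finite I" by (simp add: I_def)
    show "indep_vars (\<lambda>_. borel) (\<lambda>i \<omega>. real (Y i \<omega>)) I"
      by (rule indep_vars_compose2[OF indep_vars_subset[OF indep_Y]]) auto
    fix i assume "i \<in> I"
    then obtain l where l: "i = Some l" "l \<ge> 1" by (auto simp: I_def)
    show "AE x in M. real (Y i x) \<in> {0..1}"
      by (rule AE_I2) (use bern_vals[OF l(2)] in \<open>force simp: Y_def l\<close>)
  qed simp
  have mean: "(\<Sum>i\<in>I. expectation (\<lambda>\<omega>. real (Y i \<omega>))) = m * p"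
    by (simp add: I_def sum.reindex Y_def expectation_B)
  have sum_Y: "(\<Sum>i\<in>I. real (Y i \<omega>)) = real (S m \<omega>)" for \<omega>
    by (simp add: I_def sum.reindex Y_def S_def)
  have range: "(\<Sum>i\<in>I. (1 - 0::real)\<^sup>2) = m" by (simp add: I_def card_image)
  show "prob {\<omega> \<in> space M. m * p + \<epsilon> \<le> real (S m \<omega>)} \<le> exp (-2 * \<epsilon>\<^sup>2 / m)"
    using H.Hoeffding_ineq_ge[OF \<epsilon>] m unfolding mean sum_Y range by simp
  show "prob {\<omega> \<in> space M. real (S m \<omega>) \<le> m * p - \<epsilon>} \<le> exp (-2 * \<epsilon>\<^sup>2 / m)"
    using H.Hoeffding_ineq_le[OF \<epsilon>] m unfolding mean sum_Y range by simp
qed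

lemma indep_v_S:
  "prob ({\<omega> \<in> space M. y \<le> real (v \<omega>)} \<inter> {\<omega> \<in> space M. c \<le> real (S m \<omega>)}) =
     q y * prob {\<omega> \<in> space M. c \<le> real (S m \<omega>)}"
proof -
  have "indep_var (PiM {None} (\<lambda>_. count_space UNIV)) (\<lambda>\<omega>. restrict (\<lambda>i. Y i \<omega>) {None})
     (PiM (Some ` {1..m}) (\<lambda>_. count_space UNIV)) (\<lambda>\<omega>. restrict (\<lambda>i. Y i \<omega>) (Some ` {1..m}))"
    by (rule indep_var_restrict[OF indep_Y]) auto
  then have "indep_var (count_space UNIV) ((\<lambda>f. f None) \<circ> (\<lambda>\<omega>. restrict (\<lambda>i. Y i \<omega>) {None}))
     (count_space UNIV) ((\<lambda>f. \<Sum>l\<in>{1..m}. f (Some l)) \<circ> (\<lambda>\<omega>. restrict (\<lambda>i. Y i \<omega>) (Some ` {1..m})))"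
    by (rule indep_var_compose) measurable
  moreover have "(\<lambda>f. f None) \<circ> (\<lambda>\<omega>. restrict (\<lambda>i. Y i \<omega>) {None}) = v"
    by (auto simp: Y_def)
  moreover have "(\<lambda>f. \<Sum>l\<in>{1..m}. f (Some l)) \<circ> (\<lambda>\<omega>. restrict (\<lambda>i. Y i \<omega>) (Some ` {1..m})) = S m"
    by (auto simp: Y_def S_def fun_eq_iff)
  ultimately have "indep_var (count_space UNIV) v (count_space UNIV) (S m)" by simp
  from indep_varD[OF this, of "{n. y \<le> real n}" "{n. c \<le> real n}"]
  show ?thesis
    by (simp add: q_def vimage_def Int_def conj_commute conj_left_commute)
qed

lemma partial_sum_upper_tail:
  assumes x: "0 < x" and d: "0 \<le> d" and m: "real m \<le> x - d" and j: "real j = p * x"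
  shows "prob {\<omega> \<in> space M. real j \<le> real (S m \<omega>)} \<le> exp (-2 * (p * d)\<^sup>2 / x)"
proof (cases "m = 0")
  case True
  have "0 < real j" using j x p_pos by simp
  then have "{\<omega> \<in> space M. real j \<le> real (S m \<omega>)} = {}" using True by (auto simp: S_def)
  then show ?thesis by (metis exp_ge_zero measure_empty)
next
  case False
  define \<epsilon> where "\<epsilon> = real j - m * p"
  have "p * d \<le> p * (x - real m)" using m p_pos by (intro mult_left_mono) auto
  then have \<epsilon>: "p * d \<le> \<epsilon>" using j by (simp add: \<epsilon>_def algebra_simps)
  have pd: "0 \<le> p * d" using p_pos d by simp
  have "prob {\<omega> \<in> space M. real j \<le> real (S m \<omega>)} = prob {\<omega> \<in> space M. m * p + \<epsilon> \<le> real (S m \<omega>)}"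
    by (simp add: \<epsilon>_def)
  also have "\<dots> \<le> exp (-2 * \<epsilon>\<^sup>2 / m)"
    using hoeffding_S(1)[of m \<epsilon>] False \<epsilon> pd by simp
  also have "\<dots> \<le> exp (-2 * (p * d)\<^sup>2 / x)"
  proof -
    have "(p * d)\<^sup>2 / x \<le> \<epsilon>\<^sup>2 / x" using \<epsilon> pd x by (intro divide_right_mono power_mono) auto
    also have "\<dots> \<le> \<epsilon>\<^sup>2 / m" using m d False by (intro divide_left_mono) auto
    finally show ?thesis by simp
  qed
  finally show ?thesis .
qed

lemma partial_sum_lower_tail:
  assumes x: "0 < x" and w: "0 < w" and j: "real j = p * x"
  shows "1 - exp (-2 * (p * w)\<^sup>2 / (x + w + 1)) \<le> prob {\<omega> \<in> space M. real j \<le> real (S (nat \<lceil>x + w\<rceil>) \<omega>)}"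
proof -
  define m where "m = nat \<lceil>x + w\<rceil>"
  have m: "1 \<le> m" "x + w \<le> real m" "real m \<le> x + w + 1"
    using x w by (auto simp: m_def) linarith+
  define \<epsilon> where "\<epsilon> = m * p - real j"
  have "p * w \<le> p * (real m - x)" using m p_pos by (intro mult_left_mono) auto
  then have \<epsilon>: "p * w \<le> \<epsilon>" using j by (simp add: \<epsilon>_def algebra_simps)
  have pw: "0 \<le> p * w" using p_pos w by simp
  define A where "A = {\<omega> \<in> space M. real (S m \<omega>) \<le> m * p - \<epsilon>}"
  have A: "A \<in> events" unfolding A_def by measurable
  have "prob A \<le> exp (-2 * \<epsilon>\<^sup>2 / m)"
    using hoeffding_S(2)[of m \<epsilon>] m \<epsilon> pw by (simp add: A_def)
  also have "\<dots> \<le> exp (-2 * (p * w)\<^sup>2 / (x + w + 1))"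
  proof -
    have "(p * w)\<^sup>2 / (x + w + 1) \<le> \<epsilon>\<^sup>2 / (x + w + 1)"
      using \<epsilon> pw x w by (intro divide_right_mono power_mono) auto
    also have "\<dots> \<le> \<epsilon>\<^sup>2 / m" using m by (intro divide_left_mono) auto
    finally show ?thesis by simp
  qed
  finally have "prob A \<le> exp (-2 * (p * w)\<^sup>2 / (x + w + 1))" .
  moreover have "prob (space M - A) \<le> prob {\<omega> \<in> space M. real j \<le> real (S m \<omega>)}"
    by (intro finite_measure_mono) (auto simp: A_def \<epsilon>_def)
  moreover have "prob (space M - A) = 1 - prob A" using A by (rule prob_compl)
  ultimately show ?thesis unfolding m_def by linarith
qed

(* Lower comparison: if v >= x + w, the first ceiling (x + w) trials already suffice with high
   probability. *)
lemma lower_bound: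
  assumes x: "0 < x" and w: "0 < w" and j: "real j = p * x"
  shows "q (x + w) * (1 - exp (-2 * (p * w)\<^sup>2 / (x + w + 1))) \<le> T j"
proof -
  define m where "m = nat \<lceil>x + w\<rceil>"
  have sub: "{\<omega> \<in> space M. x + w \<le> real (v \<omega>)} \<inter> {\<omega> \<in> space M. real j \<le> real (S m \<omega>)}
      \<subseteq> {\<omega> \<in> space M. j \<le> thinned B v \<omega>}"
  proof safe
    fix \<omega> assume \<omega>: "\<omega> \<in> space M" "x + w \<le> real (v \<omega>)" "real j \<le> real (S m \<omega>)"
    have "m \<le> v \<omega>" using \<omega>(2) unfolding m_def by (simp add: nat_le_iff ceiling_le_iff)
    then have "S m \<omega> \<le> S (v \<omega>) \<omega>" by (rule S_mono)
    then show "j \<le> thinned B v \<omega>" using \<omega>(3) by (simp add: thinned_eq_S)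
  qed
  have "q (x + w) * (1 - exp (-2 * (p * w)\<^sup>2 / (x + w + 1)))
      \<le> q (x + w) * prob {\<omega> \<in> space M. real j \<le> real (S m \<omega>)}"
    using partial_sum_lower_tail[OF x w j] by (intro mult_left_mono) (auto simp: m_def q_def)
  also have "\<dots> = prob ({\<omega> \<in> space M. x + w \<le> real (v \<omega>)} \<inter> {\<omega> \<in> space M. real j \<le> real (S m \<omega>)})"
    by (rule indep_v_S[symmetric])
  also have "\<dots> \<le> T j" unfolding T_def by (intro finite_measure_mono[OF sub]) measurable
  finally show ?thesis .
qed

(* If S_v >= j then v >= x - h, or v lies in one of the windows [x - (i+1) h, x - i h],
   or v <= x - (K+1) h; in the latter cases the partial sum up to the window end is >= j. *)
lemma thinned_event_cover:
  assumes h: "0 < h"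
  shows "{\<omega> \<in> space M. j \<le> thinned B v \<omega>} \<subseteq>
      {\<omega> \<in> space M. x - h \<le> real (v \<omega>)}
    \<union> (\<Union>i\<in>{1..K}. {\<omega> \<in> space M. x - real (i+1) * h \<le> real (v \<omega>)}
                   \<inter> {\<omega> \<in> space M. real j \<le> real (S (nat \<lfloor>x - real i * h\<rfloor>) \<omega>)})
    \<union> {\<omega> \<in> space M. real j \<le> real (S (nat \<lfloor>x - real (K+1) * h\<rfloor>) \<omega>)}"
    (is "_ \<subseteq> ?V \<union> ?W \<union> ?Z")
proof
  fix \<omega> assume "\<omega> \<in> {\<omega> \<in> space M. j \<le> thinned B v \<omega>}"
  then have \<omega>: "\<omega> \<in> space M" "j \<le> S (v \<omega>) \<omega>" by (auto simp: thinned_eq_S)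
  have S_le: "real j \<le> real (S (nat \<lfloor>y\<rfloor>) \<omega>)" if "real (v \<omega>) \<le> y" for y
  proof -
    have "v \<omega> \<le> nat \<lfloor>y\<rfloor>" using that by (simp add: le_nat_floor le_floor_iff)
    then show ?thesis using S_mono[of "v \<omega>" "nat \<lfloor>y\<rfloor>" \<omega>] \<omega>(2) by simp
  qed
  consider "x - h \<le> real (v \<omega>)" | "real (v \<omega>) \<le> x - real (K+1) * h"
    | "x - real (K+1) * h < real (v \<omega>)" "real (v \<omega>) < x - h" by linarith
  then show "\<omega> \<in> ?V \<union> ?W \<union> ?Z"
  proof cases
    case 1
    then show ?thesis using \<omega> by simp
  next
    case 2
    then show ?thesis using \<omega> S_le by simp
  next
    case 3
    \<comment> \<open>\<open>v \<omega>\<close> lies in the window \<open>[x - (i+1) h, x - i h]\<close> with \<open>i = \<lfloor>(x - v \<omega>) / h\<rfloor>\<close>\<close>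
    define y where "y = (x - real (v \<omega>)) / h"
    define i where "i = nat \<lfloor>y\<rfloor>"
    have y: "1 < y" "y < real K + 1" using 3 h by (simp_all add: field_simps y_def)
    then have i_eq: "real i = real_of_int \<lfloor>y\<rfloor>" by (simp add: i_def)
    have i: "real i \<le> y" "y < real i + 1" using i_eq floor_correct[of y] by simp_all
    have "1 \<le> i" "i \<le> K" using i y by linarith+
    have "real i * h \<le> x - real (v \<omega>)" "x - real (v \<omega>) < (real i + 1) * h"
      using i h by (simp_all add: field_simps y_def)
    moreover have "real (i+1) * h = real i * h + h" by (simp add: algebra_simps)
    ultimately have "x - real (i+1) * h \<le> real (v \<omega>)"
      and "real j \<le> real (S (nat \<lfloor>x - real i * h\<rfloor>) \<omega>)"
      using S_le[of "x - real i * h"] by (simp_all add: algebra_simps)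
    then have "\<omega> \<in> ?W"
      using \<omega>(1) \<open>1 \<le> i\<close> \<open>i \<le> K\<close> by (intro UN_I[of i]) auto
    then show ?thesis by blast
  qed
qed

(* Upper comparison: union bound over the cover, using independence and Hoeffding in each window. *)
lemma upper_bound:
  assumes x: "0 < x" and h: "0 < h" and j: "real j = p * x" and K: "real (K+1) * h \<le> x"
  shows "T j \<le> q (x - h)
               + (\<Sum>i\<in>{1..K}. q (x - real (i+1) * h) * exp (-2 * (p * (real i * h))\<^sup>2 / x))
               + exp (-2 * (p * (real (K+1) * h))\<^sup>2 / x)"
proof -
  define V where "V = {\<omega> \<in> space M. x - h \<le> real (v \<omega>)}"
  define W where "W i = {\<omega> \<in> space M. x - real (i+1) * h \<le> real (v \<omega>)}
                   \<inter> {\<omega> \<in> space M. real j \<le> real (S (nat \<lfloor>x - real i * h\<rfloor>) \<omega>)}" for i :: nat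
  define Z where "Z = {\<omega> \<in> space M. real j \<le> real (S (nat \<lfloor>x - real (K+1) * h\<rfloor>) \<omega>)}"
  have events: "V \<in> events" "\<And>i. W i \<in> events" "Z \<in> events"
    unfolding V_def W_def Z_def by measurable
  have trials: "real (nat \<lfloor>x - real i * h\<rfloor>) \<le> x - real i * h" if "real i * h \<le> x" for i :: nat
    using that by linarith
  have union: "(\<Union>i\<in>{1..K}. W i) \<in> events" using events by auto
  have "T j \<le> prob (V \<union> (\<Union>i\<in>{1..K}. W i) \<union> Z)"
    unfolding T_def V_def W_def Z_def
    by (rule finite_measure_mono[OF thinned_event_cover[OF h]])
       (use events union in \<open>simp add: V_def W_def Z_def\<close>)
  also have "\<dots> \<le> prob (V \<union> (\<Union>i\<in>{1..K}. W i)) + prob Z"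
    using events union by (intro measure_Un_le) auto
  also have "prob (V \<union> (\<Union>i\<in>{1..K}. W i)) \<le> prob V + prob (\<Union>i\<in>{1..K}. W i)"
    using events union by (intro measure_Un_le) auto
  also have "prob (\<Union>i\<in>{1..K}. W i) \<le> (\<Sum>i\<in>{1..K}. prob (W i))"
    using events by (intro finite_measure_subadditive_finite) auto
  also have "(\<Sum>i\<in>{1..K}. prob (W i))
      \<le> (\<Sum>i\<in>{1..K}. q (x - real (i+1) * h) * exp (-2 * (p * (real i * h))\<^sup>2 / x))"
  proof (rule sum_mono)
    fix i assume i: "i \<in> {1..K}"
    have "real i * h \<le> real (K+1) * h" using i h by (intro mult_right_mono) auto
    then have "real i * h \<le> x" using K by linarith
    have "prob (W i) = q (x - real (i+1) * h)
        * prob {\<omega> \<in> space M. real j \<le> real (S (nat \<lfloor>x - real i * h\<rfloor>) \<omega>)}"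
      unfolding W_def by (rule indep_v_S)
    also have "\<dots> \<le> q (x - real (i+1) * h) * exp (-2 * (p * (real i * h))\<^sup>2 / x)"
      using partial_sum_upper_tail[OF x _ trials[OF \<open>real i * h \<le> x\<close>] j] h
      by (intro mult_left_mono) (auto simp: q_def)
    finally show "prob (W i) \<le> q (x - real (i+1) * h) * exp (-2 * (p * (real i * h))\<^sup>2 / x)" .
  qed
  also have "prob Z \<le> exp (-2 * (p * (real (K+1) * h))\<^sup>2 / x)"
    unfolding Z_def using partial_sum_upper_tail[OF x _ trials[OF K] j] h by simp
  also have "prob V = q (x - h)" by (simp add: V_def q_def)
  finally show ?thesis by simp
qed

end

sublocale thinning \<subseteq> tail_comparison q T p
proof unfold_locales
  show "\<And>x. 0 \<le> q x" by (simp add: q_def)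
  show "\<And>x y. x \<le> y \<Longrightarrow> q y \<le> q x"
    unfolding q_def by (intro finite_measure_mono) auto
  show "0 < p" by (rule p_pos)
qed (fact upper_bound lower_bound)+

(* Regularly varying tails q x = L x x^(-a), L slowly varying; no condition on a is needed. *)
locale regularly_varying_tail = tail_comparison +
  fixes L :: "real \<Rightarrow> real" and a :: real
  assumes L_slowly_varying: "slowly_varying L"
    and q_eq: "\<And>x. 0 < x \<Longrightarrow> q x = L x * x powr (- a)"
begin

lemma q_pos: "0 < q x"
  using L_slowly_varying by (rule q_pos_if_slowly_varying_factor[of L 1]) (auto simp: q_eq)

lemma q_ratio:
  assumes c: "0 < c"
  shows "((\<lambda>x. q (c * x) / q x) \<longlongrightarrow> c powr (- a)) at_top"
proof -
  have "((\<lambda>x. L (c * x) / L x * c powr (- a)) \<longlongrightarrow> 1 * c powr (- a)) at_top"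
    using L_slowly_varying c unfolding slowly_varying_def by (intro tendsto_intros) auto
  moreover have "eventually (\<lambda>x. L (c * x) / L x * c powr (- a) = q (c * x) / q x) at_top"
    using eventually_gt_at_top[of 0]
    by eventually_elim (use c in \<open>simp add: q_eq powr_mult\<close>)
  ultimately show ?thesis by (simp add: tendsto_cong)
qed

(* q decreases at most by a constant factor per doubling, hence subexponentially. *)
lemma exp_dominated:
  assumes "0 < c" "0 < e"
  shows "eventually (\<lambda>x. exp (- c * x) \<le> e * q x) at_top"
proof -
  define r where "r = 2 powr (- a) / 2"
  have r: "0 < r" "r < 2 powr (- a)" by (auto simp: r_def)
  have "eventually (\<lambda>x. r < q (2 * x) / q x) at_top"
    using q_ratio[of 2] r by (intro order_tendstoD) auto
  then have "eventually (\<lambda>x. \<forall>y. x \<le> y \<and> y \<le> 2*x \<longrightarrow> ln (q x) - \<bar>ln r\<bar> \<le> ln (q y)) at_top"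
  proof eventually_elim
    case (elim x)
    show ?case
    proof (intro allI impI)
      fix y assume y: "x \<le> y \<and> y \<le> 2*x"
      have "r * q x \<le> q (2 * x)" using elim q_pos[of x] by (simp add: field_simps)
      also have "\<dots> \<le> q y" using y by (intro q_antimono) auto
      finally have "ln (r * q x) \<le> ln (q y)" using r q_pos[of x] q_pos[of y] by simp
      then show "ln (q x) - \<bar>ln r\<bar> \<le> ln (q y)" using r q_pos[of x] by (simp add: ln_mult)
    qed
  qed
  then show ?thesis
    by (rule exp_dominated_by_dyadic_stable[rotated 2]) (use assms q_pos in auto)
qed

(* Upper bound with one window of width theta x, where (1 - theta)^(-a) is close to 1. *)
lemma upper_relative:
  assumes \<epsilon>: "0 < \<epsilon>"
  shows "eventually (\<lambda>x. \<forall>j. real j = p * x \<longrightarrow> T j \<le> (1 + \<epsilon>) * q x) at_top"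
proof -
  have "((\<lambda>t. (1 - t) powr (- a)) \<longlongrightarrow> (1 - 0) powr (- a)) (at_right 0)"
    by (intro tendsto_intros) auto
  then have "eventually (\<lambda>t. (1 - t) powr (- a) < 1 + \<epsilon>/2) (at_right 0)"
    using \<epsilon> by (intro order_tendstoD) auto
  then obtain \<theta> where \<theta>: "0 < \<theta>" "\<theta> < 1" "(1 - \<theta>) powr (- a) < 1 + \<epsilon>/2"
    by (rule obtain_small_positive)
  have "eventually (\<lambda>x. q ((1 - \<theta>) * x) / q x < 1 + \<epsilon>/2) at_top"
    using q_ratio[of "1 - \<theta>"] \<theta> by (intro order_tendstoD) auto
  moreover have "eventually (\<lambda>x. exp (- (2 * p\<^sup>2 * \<theta>\<^sup>2) * x) \<le> \<epsilon>/2 * q x) at_top"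
    using p_pos \<theta> \<epsilon> by (intro exp_dominated) auto
  moreover have "eventually (\<lambda>x::real. 0 < x) at_top" by (rule eventually_gt_at_top)
  ultimately show ?thesis
  proof eventually_elim
    case (elim x)
    show ?case
    proof (intro allI impI)
      fix j assume j: "real j = p * x"
      have "T j \<le> q (x - \<theta> * x) + exp (-2 * (p * (\<theta> * x))\<^sup>2 / x)"
        using single_window_upper[of "\<theta> * x" x j] \<theta> elim j by auto
      also have "x - \<theta> * x = (1 - \<theta>) * x" by (simp add: algebra_simps)
      also have "-2 * (p * (\<theta> * x))\<^sup>2 / x = - (2 * p\<^sup>2 * \<theta>\<^sup>2) * x"
        using elim by (simp add: power2_eq_square field_simps)
      finally have "T j \<le> q ((1 - \<theta>) * x) + exp (- (2 * p\<^sup>2 * \<theta>\<^sup>2) * x)" .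
      moreover have "q ((1 - \<theta>) * x) \<le> (1 + \<epsilon>/2) * q x"
        using elim q_pos[of x] by (simp add: divide_less_eq)
      ultimately show "T j \<le> (1 + \<epsilon>) * q x" using elim by (simp add: algebra_simps)
    qed
  qed
qed

(* Lower bound with a shift by theta x, where (1 + theta)^(-a) is close to 1. *)
lemma lower_relative:
  assumes \<epsilon>: "0 < \<epsilon>" "\<epsilon> \<le> 1"
  shows "eventually (\<lambda>x. \<forall>j. real j = p * x \<longrightarrow> (1 - \<epsilon>) * q x \<le> T j) at_top"
proof -
  have "((\<lambda>t. (1 + t) powr (- a)) \<longlongrightarrow> (1 + 0) powr (- a)) (at_right 0)"
    by (intro tendsto_intros) auto
  then have "eventually (\<lambda>t. 1 - \<epsilon>/2 < (1 + t) powr (- a)) (at_right 0)"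
    using \<epsilon> by (intro order_tendstoD) auto
  then obtain \<theta> where \<theta>: "0 < \<theta>" "\<theta> < 1" "1 - \<epsilon>/2 < (1 + \<theta>) powr (- a)"
    by (rule obtain_small_positive)
  have "eventually (\<lambda>x. 1 - \<epsilon>/2 < q ((1 + \<theta>) * x) / q x) at_top"
    using q_ratio[of "1 + \<theta>"] \<theta> by (intro order_tendstoD) auto
  moreover have "eventually (\<lambda>x. exp (- (2 * p\<^sup>2 * \<theta>\<^sup>2 / 3) * x) \<le> \<epsilon>/2) at_top"
    using p_pos \<theta> \<epsilon> by real_asymp
  moreover have "eventually (\<lambda>x::real. 1 \<le> x) at_top" by (rule eventually_ge_at_top)
  ultimately show ?thesis
  proof eventually_elim
    case (elim x)
    show ?case
    proof (intro allI impI)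
      fix j assume j: "real j = p * x"
      have "-2 * (p * (\<theta> * x))\<^sup>2 / (3 * x) = - (2 * p\<^sup>2 * \<theta>\<^sup>2 / 3) * x"
        using elim by (simp add: power2_eq_square field_simps)
      then have "exp (-2 * (p * (\<theta> * x))\<^sup>2 / (3 * x)) \<le> \<epsilon>/2"
        using elim by (simp only:)
      moreover have "(1 - \<epsilon>/2) * q x \<le> q (x + \<theta> * x)"
        using elim q_pos[of x] by (simp add: less_divide_eq algebra_simps)
      ultimately show "(1 - \<epsilon>) * q x \<le> T j"
        using lower_from_relative_bounds[of x "\<theta> * x" j "\<epsilon>/2"] elim j \<theta> \<epsilon> by simp
    qed
  qed
qed

theorem thinned_tail_ratio: "(\<lambda>j. \<bar>T j / q (real j / p) - 1\<bar>) \<longlonglongrightarrow> 0"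
  by (rule ratio_tendsto_one) (auto intro: q_pos upper_relative lower_relative)

end

locale weibull_tail = tail_comparison +
  fixes L :: "real \<Rightarrow> real" and \<beta> \<delta> :: real
  assumes \<beta>: "0 < \<beta>" "\<beta> < 1/2" and \<delta>: "0 < \<delta>"
    and L_slowly_varying: "slowly_varying L"
    and q_eq: "\<And>x. 0 \<le> x \<Longrightarrow> q x = L x * exp (- \<delta> * x powr \<beta>)"
begin

lemma q_pos: "0 < q x"
  using L_slowly_varying by (rule q_pos_if_slowly_varying_factor[of L 0]) (auto simp: q_eq)

lemma L_pos: "0 \<le> x \<Longrightarrow> 0 < L x"
  using q_pos[of x] q_eq[of x] by (simp add: zero_less_mult_iff)

lemma ln_q: "0 \<le> x \<Longrightarrow> ln (q x) = ln (L x) - \<delta> * x powr \<beta>"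
  using L_pos[of x] by (simp add: q_eq ln_mult)

(* L is measurable because q is monotone. *)
lemma L_log_measurable: "(\<lambda>u. ln (L (exp u))) \<in> borel_measurable borel"
proof -
  have "mono (\<lambda>x. - q x)" unfolding mono_def using q_antimono by fastforce
  then have "(\<lambda>x. - q x) \<in> borel_measurable borel"
    by (rule borel_measurable_mono)
  then have "(\<lambda>x. - (- q x)) \<in> borel_measurable borel"
    by measurable
  then have "(\<lambda>u. ln (q (exp u)) + \<delta> * exp u powr \<beta>) \<in> borel_measurable borel"
    by simp measurable
  moreover have "ln (q (exp u)) + \<delta> * exp u powr \<beta> = ln (L (exp u))" for u
    by (simp add: ln_q)
  ultimately show ?thesis by simp
qed

lemma eventually_dyadically_stable: "0 < \<eta> \<Longrightarrow> eventually (dyadically_stable L \<eta>) at_top"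
  using L_slowly_varying L_pos L_log_measurable by (intro slowly_varying_uniform) auto

(* q is subexponential: exp (- delta x^beta) is, and L has bounded dyadic oscillation. *)
lemma exp_dominated:
  assumes c: "0 < c" and e: "0 < e"
  shows "eventually (\<lambda>x. exp (- c * x) \<le> e * q x) at_top"
proof -
  have pos: "eventually (\<lambda>x. 0 < L x) at_top"
    using eventually_ge_at_top[of 0] by eventually_elim (rule L_pos)
  have dyadic: "eventually (\<lambda>x. \<forall>y. x \<le> y \<and> y \<le> 2*x \<longrightarrow> ln (L x) - 1 \<le> ln (L y)) at_top"
    using eventually_dyadically_stable[OF zero_less_one] eventually_ge_at_top[of 0]
  proof eventually_elim
    case (elim x)
    show ?case
    proof (intro allI impI)
      fix y assume "x \<le> y \<and> y \<le> 2*x"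
      then have "\<bar>ln (L y) - ln (L x)\<bar> < 1"
        using elim unfolding dyadically_stable_def by auto
      then show "ln (L x) - 1 \<le> ln (L y)" by (simp add: abs_less_iff)
    qed
  qed
  have "eventually (\<lambda>x. exp (- (c/2) * x) \<le> e * L x) at_top"
    using c e by (intro exp_dominated_by_dyadic_stable[OF pos _ dyadic]) auto
  moreover have "eventually (\<lambda>x. \<delta> * x powr \<beta> \<le> c/2 * x) at_top"
    using \<delta> \<beta> c by real_asymp
  moreover have "eventually (\<lambda>x::real. 0 \<le> x) at_top" by (rule eventually_ge_at_top)
  ultimately show ?thesis
  proof eventually_elim
    case (elim x)
    have "exp (- (c/2) * x) \<le> exp (- \<delta> * x powr \<beta>)" using elim by simp
    then have "exp (- (c/2) * x) * exp (- (c/2) * x) \<le> e * L x * exp (- \<delta> * x powr \<beta>)"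
      using elim e L_pos[of x] by (intro mult_mono) auto
    then show ?case using elim by (simp add: q_eq mult.assoc flip: exp_add)
  qed
qed

lemma q_shift_left:
  assumes stable: "dyadically_stable L \<eta> x" and x: "0 < x" and k: "0 \<le> k" "k \<le> x/2"
  shows "q (x - k) \<le> exp (\<eta> + 2 * \<delta> * k * x powr (\<beta> - 1)) * q x"
proof (rule le_exp_mult_if_ln_le[OF q_pos q_pos])
  have "ln (L (x - k)) - ln (L x) < \<eta>"
    using stable x k unfolding dyadically_stable_def by (auto dest!: spec[of _ "x - k"])
  moreover have "\<delta> * (x powr \<beta> - (x - k) powr \<beta>) \<le> \<delta> * (2 * k * x powr (\<beta> - 1))"
    using powr_decrement_le[of x k \<beta>] x k \<beta> \<delta> by (intro mult_left_mono) auto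
  ultimately show "ln (q (x - k)) \<le> ln (q x) + (\<eta> + 2 * \<delta> * k * x powr (\<beta> - 1))"
    using x k by (simp add: ln_q algebra_simps)
qed

lemma q_shift_right:
  assumes stable: "dyadically_stable L \<eta> x" and x: "0 < x" and w: "0 \<le> w" "w \<le> x"
  shows "exp (- (\<eta> + \<delta> * w * x powr (\<beta> - 1))) * q x \<le> q (x + w)"
proof -
  have "ln (L x) - ln (L (x + w)) < \<eta>"
    using stable x w unfolding dyadically_stable_def by (auto dest!: spec[of _ "x + w"])
  moreover have "\<delta> * ((x + w) powr \<beta> - x powr \<beta>) \<le> \<delta> * (w * x powr (\<beta> - 1))"
    using powr_increment_le[of x "x + w" \<beta>] x w \<beta> \<delta> by (intro mult_left_mono) auto
  ultimately have "ln (q x) \<le> ln (q (x + w)) + (\<eta> + \<delta> * w * x powr (\<beta> - 1))"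
    using x w by (simp add: ln_q algebra_simps)
  then have "q x \<le> exp (\<eta> + \<delta> * w * x powr (\<beta> - 1)) * q (x + w)"
    by (rule le_exp_mult_if_ln_le[OF q_pos q_pos])
  then have "exp (- (\<eta> + \<delta> * w * x powr (\<beta> - 1))) * q x
      \<le> exp (- (\<eta> + \<delta> * w * x powr (\<beta> - 1))) * (exp (\<eta> + \<delta> * w * x powr (\<beta> - 1)) * q (x + w))"
    by (intro mult_left_mono) auto
  then show ?thesis by (simp add: mult.assoc[symmetric] flip: exp_add)
qed

(* In the i-th window the log-tail loses at most 2 (i+1) delta h x^(beta-1), while Hoeffding
   gains 2 i^2 p^2 h^2 / x; both are linear in i up to the factor i^2 >= i. *)
lemma window_term_bound:
  assumes stable: "dyadically_stable L \<eta> x" and x: "0 < x" and h: "0 < h"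
    and i: "1 \<le> i" and window: "real (i+1) * h \<le> x/2"
  shows "q (x - real (i+1) * h) * exp (-2 * (p * (real i * h))\<^sup>2 / x)
         \<le> exp \<eta> * q x * exp (4 * \<delta> * (h * x powr (\<beta> - 1)) - 2 * ((p * h)\<^sup>2 / x)) ^ i"
proof -
  define a where "a = \<delta> * (h * x powr (\<beta> - 1))"
  define b where "b = (p * h)\<^sup>2 / x"
  have ab: "0 \<le> a" "0 \<le> b" using \<delta> h x by (auto simp: a_def b_def)
  have i1: "1 \<le> real i" using i by simp
  have shift: "q (x - real (i+1) * h) \<le> exp (\<eta> + 2 * real (i+1) * a) * q x"
    using q_shift_left[OF stable x, of "real (i+1) * h"] h window by (simp add: a_def mult_ac)
  have gauss: "-2 * (p * (real i * h))\<^sup>2 / x = - (2 * (real i)\<^sup>2 * b)"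
    by (simp add: b_def power_mult_distrib)
  have exponent: "2 * real (i+1) * a + - (2 * (real i)\<^sup>2 * b) \<le> real i * (4 * a - 2 * b)"
  proof -
    have "2 * real (i+1) * a \<le> 4 * real i * a" using i1 ab by (intro mult_right_mono) auto
    moreover have "real i * b \<le> (real i)\<^sup>2 * b"
      using i1 ab by (intro mult_right_mono) (auto simp: power2_eq_square)
    ultimately show ?thesis by (simp add: algebra_simps)
  qed
  have "q (x - real (i+1) * h) * exp (-2 * (p * (real i * h))\<^sup>2 / x)
      \<le> exp (\<eta> + 2 * real (i+1) * a) * q x * exp (- (2 * (real i)\<^sup>2 * b))"
    unfolding gauss using shift by (intro mult_right_mono) auto
  also have "\<dots> = exp \<eta> * q x * exp (2 * real (i+1) * a + - (2 * (real i)\<^sup>2 * b))"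
    by (simp only: exp_add mult_ac)
  also have "\<dots> \<le> exp \<eta> * q x * exp (real i * (4 * a - 2 * b))"
    using exponent q_pos[of x] by (intro mult_left_mono) auto
  also have "exp (real i * (4 * a - 2 * b)) = exp (4 * a - 2 * b) ^ i"
    by (rule exp_of_nat_mult)
  finally show ?thesis by (simp add: a_def b_def mult.assoc)
qed

lemma window_sum_bound:
  assumes stable: "dyadically_stable L \<eta> x" and x: "0 < x" and h: "0 < h"
    and K: "real (K+1) * h \<le> x/2"
    and ratio: "exp (4 * \<delta> * (h * x powr (\<beta> - 1)) - 2 * ((p * h)\<^sup>2 / x)) \<le> 1/2"
  shows "(\<Sum>i\<in>{1..K}. q (x - real (i+1) * h) * exp (-2 * (p * (real i * h))\<^sup>2 / x))
         \<le> 2 * exp \<eta> * exp (4 * \<delta> * (h * x powr (\<beta> - 1)) - 2 * ((p * h)\<^sup>2 / x)) * q x"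
proof -
  define r where "r = exp (4 * \<delta> * (h * x powr (\<beta> - 1)) - 2 * ((p * h)\<^sup>2 / x))"
  have "(\<Sum>i\<in>{1..K}. q (x - real (i+1) * h) * exp (-2 * (p * (real i * h))\<^sup>2 / x))
      \<le> (\<Sum>i\<in>{1..K}. exp \<eta> * q x * r ^ i)"
  proof (rule sum_mono)
    fix i assume i: "i \<in> {1..K}"
    have "real (i+1) * h \<le> real (K+1) * h" using i h by (intro mult_right_mono) auto
    then show "q (x - real (i+1) * h) * exp (-2 * (p * (real i * h))\<^sup>2 / x) \<le> exp \<eta> * q x * r ^ i"
      unfolding r_def using i K by (intro window_term_bound[OF stable x h]) auto
  qed
  also have "\<dots> = exp \<eta> * q x * (\<Sum>i\<in>{1..K}. r ^ i)" by (simp add: sum_distrib_left)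
  also have "\<dots> \<le> exp \<eta> * q x * (2 * r)"
    using geometric_sum_le[of r K] ratio q_pos[of x] by (intro mult_left_mono) (auto simp: r_def)
  finally show ?thesis by (simp add: r_def mult_ac)
qed

lemma upper_three_terms:
  assumes stable: "dyadically_stable L \<eta> x" and x: "0 < x" and h: "0 < h" "h \<le> x/8"
    and j: "real j = p * x"
    and ratio: "exp (4 * \<delta> * (h * x powr (\<beta> - 1)) - 2 * ((p * h)\<^sup>2 / x)) \<le> 1/2"
  shows "T j \<le> exp (\<eta> + 2 * \<delta> * h * x powr (\<beta> - 1)) * q x
             + 2 * exp \<eta> * exp (4 * \<delta> * (h * x powr (\<beta> - 1)) - 2 * ((p * h)\<^sup>2 / x)) * q x
             + exp (- (p\<^sup>2/8) * x)"
proof -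
  obtain K where K: "x/4 \<le> real (K+1) * h" "real (K+1) * h \<le> x/2"
    using window_count_exists[OF h] by blast
  have "real (K+1) * h \<le> x" using K x by linarith
  then have "T j \<le> q (x - h)
             + (\<Sum>i\<in>{1..K}. q (x - real (i+1) * h) * exp (-2 * (p * (real i * h))\<^sup>2 / x))
             + exp (-2 * (p * (real (K+1) * h))\<^sup>2 / x)"
    by (rule upper[OF x h(1) j])
  moreover have "q (x - h) \<le> exp (\<eta> + 2 * \<delta> * h * x powr (\<beta> - 1)) * q x"
    using h x by (intro q_shift_left[OF stable]) auto
  moreover note window_sum_bound[OF stable x h(1) K(2) ratio]
  moreover note gaussian_factor_le[OF x K(1), of p]
  ultimately show ?thesis by linarith
qed

(* Upper bound with windows of width theta x^(1-beta): the first window costs a factor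
   1 + epsilon/2, the remaining windows and the final term are at most epsilon/4 q x each. *)
lemma upper_relative:
  assumes \<epsilon>: "0 < \<epsilon>" "\<epsilon> \<le> 1"
  shows "eventually (\<lambda>x. \<forall>j. real j = p * x \<longrightarrow> T j \<le> (1 + \<epsilon>) * q x) at_top"
proof -
  define t where "t = ln (1 + \<epsilon>/2)"
  define \<eta> where "\<eta> = t/2"
  define \<theta> where "\<theta> = t / (4 * \<delta>)"
  define \<rho> where "\<rho> = min (1/2) (\<epsilon> / (8 * exp \<eta>))"
  have t: "0 < t" "exp t = 1 + \<epsilon>/2" using \<epsilon> by (auto simp: t_def)
  have \<theta>: "0 < \<theta>" "2 * \<delta> * \<theta> = t/2" using t \<delta> by (auto simp: \<theta>_def)
  have "2 * exp \<eta> * \<rho> \<le> 2 * exp \<eta> * (\<epsilon> / (8 * exp \<eta>))"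
    by (intro mult_left_mono) (auto simp: \<rho>_def)
  then have \<rho>: "0 < \<rho>" "\<rho> \<le> 1/2" "2 * exp \<eta> * \<rho> \<le> \<epsilon>/4"
    using \<epsilon> by (auto simp: \<rho>_def)
  have "eventually (\<lambda>x::real. 1 \<le> x) at_top" by (rule eventually_ge_at_top)
  moreover have "eventually (\<lambda>x. \<theta> * x powr (1 - \<beta>) \<le> x / 8) at_top"
    using \<theta> \<beta> by real_asymp
  moreover have "eventually (\<lambda>x. exp (4 * \<delta> * \<theta> - 2 * p\<^sup>2 * \<theta>\<^sup>2 * x powr (1 - 2 * \<beta>)) \<le> \<rho>) at_top"
    using p_pos \<theta> \<beta> \<rho> by real_asymp
  moreover have "eventually (\<lambda>x. exp (- (p\<^sup>2/8) * x) \<le> \<epsilon>/4 * q x) at_top"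
    using p_pos \<epsilon> by (intro exp_dominated) auto
  moreover have "eventually (dyadically_stable L \<eta>) at_top"
    using t by (intro eventually_dyadically_stable) (simp add: \<eta>_def)
  ultimately show ?thesis
  proof eventually_elim
    case (elim x)
    define h where "h = \<theta> * x powr (1 - \<beta>)"
    have x: "0 < x" using elim by simp
    have h: "0 < h" "h \<le> x/8" using elim \<theta> x by (auto simp: h_def)
    have scale: "h * x powr (\<beta> - 1) = \<theta>" "(p * h)\<^sup>2 / x = p\<^sup>2 * \<theta>\<^sup>2 * x powr (1 - 2 * \<beta>)"
      using window_scaling(1)[OF x] window_scaling(2)[OF x, of p \<theta> \<beta>]
      by (simp_all add: h_def)
    have ratio: "exp (4 * \<delta> * (h * x powr (\<beta> - 1)) - 2 * ((p * h)\<^sup>2 / x)) \<le> \<rho>"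
      unfolding scale using elim(3) by (simp add: mult.assoc)
    have "\<eta> + 2 * \<delta> * h * x powr (\<beta> - 1) = t"
      using scale \<theta> by (simp add: \<eta>_def mult.assoc)
    then have first: "exp (\<eta> + 2 * \<delta> * h * x powr (\<beta> - 1)) = 1 + \<epsilon>/2"
      using t by simp
    have middle: "2 * exp \<eta> * exp (4 * \<delta> * (h * x powr (\<beta> - 1)) - 2 * ((p * h)\<^sup>2 / x)) * q x
        \<le> \<epsilon>/4 * q x"
    proof -
      have "2 * exp \<eta> * exp (4 * \<delta> * (h * x powr (\<beta> - 1)) - 2 * ((p * h)\<^sup>2 / x))
          \<le> 2 * exp \<eta> * \<rho>"
        using ratio by (intro mult_left_mono) auto
      also have "\<dots> \<le> \<epsilon>/4" using \<rho> by simp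
      finally show ?thesis using q_pos[of x] by (intro mult_right_mono) auto
    qed
    show ?case
    proof (intro allI impI)
      fix j assume j: "real j = p * x"
      have "T j \<le> exp (\<eta> + 2 * \<delta> * h * x powr (\<beta> - 1)) * q x
             + 2 * exp \<eta> * exp (4 * \<delta> * (h * x powr (\<beta> - 1)) - 2 * ((p * h)\<^sup>2 / x)) * q x
             + exp (- (p\<^sup>2/8) * x)"
        using ratio \<rho> by (intro upper_three_terms[OF elim(5) x h j]) auto
      then show "T j \<le> (1 + \<epsilon>) * q x"
        using first middle elim(4) by (simp add: algebra_simps)
    qed
  qed
qed

lemma lower_relative:
  assumes \<epsilon>: "0 < \<epsilon>" "\<epsilon> \<le> 1"
  shows "eventually (\<lambda>x. \<forall>j. real j = p * x \<longrightarrow> (1 - \<epsilon>) * q x \<le> T j) at_top"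
proof -
  define \<theta> where "\<theta> = \<epsilon> / (8 * \<delta>)"
  have \<theta>: "0 < \<theta>" "\<delta> * \<theta> = \<epsilon>/8" using \<epsilon> \<delta> by (auto simp: \<theta>_def)
  have "eventually (\<lambda>x::real. 1 \<le> x) at_top" by (rule eventually_ge_at_top)
  moreover have "eventually (\<lambda>x. \<theta> * x powr (1 - \<beta>) \<le> x) at_top"
    using \<theta> \<beta> by real_asymp
  moreover have "eventually (\<lambda>x. exp (- (2/3) * p\<^sup>2 * \<theta>\<^sup>2 * x powr (1 - 2 * \<beta>)) \<le> \<epsilon>/2) at_top"
    using p_pos \<theta> \<beta> \<epsilon> by real_asymp
  moreover have "eventually (dyadically_stable L (\<epsilon>/8)) at_top"
    using \<epsilon> by (intro eventually_dyadically_stable) simp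
  ultimately show ?thesis
  proof eventually_elim
    case (elim x)
    define h where "h = \<theta> * x powr (1 - \<beta>)"
    have x: "0 < x" using elim by simp
    have h: "0 < h" "h \<le> x" using elim \<theta> x by (auto simp: h_def)
    have scale: "h * x powr (\<beta> - 1) = \<theta>" "(p * h)\<^sup>2 / x = p\<^sup>2 * \<theta>\<^sup>2 * x powr (1 - 2 * \<beta>)"
      using window_scaling(1)[OF x] window_scaling(2)[OF x, of p \<theta> \<beta>]
      by (simp_all add: h_def)
    have "exp (- (\<epsilon>/8 + \<delta> * h * x powr (\<beta> - 1))) * q x \<le> q (x + h)"
      using h x by (intro q_shift_right[OF elim(4)]) auto
    moreover have "1 - \<epsilon>/2 \<le> exp (- (\<epsilon>/8 + \<delta> * h * x powr (\<beta> - 1)))"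
    proof -
      have "\<delta> * h * x powr (\<beta> - 1) = \<epsilon>/8" using scale \<theta> by (simp add: mult.assoc)
      then have "- (\<epsilon>/8 + \<delta> * h * x powr (\<beta> - 1)) = - (\<epsilon>/4)" by simp
      moreover have "1 - \<epsilon>/4 \<le> exp (- (\<epsilon>/4))" using exp_ge_add_one_self[of "- (\<epsilon>/4)"] by simp
      ultimately show ?thesis using \<epsilon> by simp
    qed
    ultimately have shift: "(1 - \<epsilon>/2) * q x \<le> q (x + h)"
      using q_pos[of x] by (meson mult_right_mono less_imp_le order_trans)
    have "-2 * (p * h)\<^sup>2 / (3 * x) = - (2/3) * ((p * h)\<^sup>2 / x)"
      by (simp add: field_simps)
    then have concentration_eq:
      "exp (-2 * (p * h)\<^sup>2 / (3 * x)) = exp (- (2/3) * p\<^sup>2 * \<theta>\<^sup>2 * x powr (1 - 2 * \<beta>))"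
      by (simp only: scale(2) mult.assoc)
    have "exp (-2 * (p * h)\<^sup>2 / (3 * x)) \<le> \<epsilon>/2"
      unfolding concentration_eq by (rule elim(3))
    then show ?case
      using lower_from_relative_bounds[of x h _ "\<epsilon>/2"] elim h shift \<epsilon> by simp
  qed
qed

theorem thinned_tail_ratio: "(\<lambda>j. \<bar>T j / q (real j / p) - 1\<bar>) \<longlonglongrightarrow> 0"
  by (rule ratio_tendsto_one) (auto intro: q_pos upper_relative lower_relative)

end

theorem mainTheorem11:
  fixes M :: "'a measure" and B :: "nat \<Rightarrow> 'a \<Rightarrow> nat" and v :: "'a \<Rightarrow> nat" and p :: real
  assumes "prob_space M"
    and p: "0 < p" "p < 1"
    and indep: "prob_space.indep_vars M (\<lambda>_. count_space UNIV)
                  (\<lambda>i. case i of None \<Rightarrow> v | Some n \<Rightarrow> B n) (UNIV :: nat option set)"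
    and bern_vals: "\<And>n \<omega>. n \<ge> 1 \<Longrightarrow> \<omega> \<in> space M \<Longrightarrow> B n \<omega> \<in> {0, 1}"
    and bern_p: "\<And>n. n \<ge> 1 \<Longrightarrow> measure M {\<omega> \<in> space M. B n \<omega> = 1} = p"
    and tail: "(\<exists>L a. a > 1 \<and> slowly_varying L \<and>
                  (\<forall>x>0. measure M {\<omega> \<in> space M. real (v \<omega>) \<ge> x} = L x * x powr (- a)))
             \<or> (\<exists>L \<beta> \<delta>. 0 < \<beta> \<and> \<beta> < 1/2 \<and> \<delta> > 0 \<and> slowly_varying L \<and>
                  (\<forall>x\<ge>0. measure M {\<omega> \<in> space M. real (v \<omega>) \<ge> x} = L x * exp (- \<delta> * x powr \<beta>)))"
  shows "((\<lambda>j::nat. \<bar>measure M {\<omega> \<in> space M. thinned B v \<omega> \<ge> j}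
                     / measure M {\<omega> \<in> space M. real (v \<omega>) \<ge> real j / p} - 1\<bar>) \<longlonglongrightarrow> 0)"
proof -
  interpret thinning M B v p
    using assms by (intro thinning.intro thinning_axioms.intro) auto
  have "(\<lambda>j. \<bar>T j / q (real j / p) - 1\<bar>) \<longlonglongrightarrow> 0"
    using tail
  proof (elim disjE exE conjE)
    fix L a assume "slowly_varying L"
      and "\<forall>x>0. prob {\<omega> \<in> space M. x \<le> real (v \<omega>)} = L x * x powr (- a)"
    then interpret regularly_varying_tail q T p L a
      by unfold_locales (auto simp: q_def)
    show ?thesis by (rule thinned_tail_ratio)
  next
    fix L \<beta> \<delta> assume "0 < \<beta>" "\<beta> < 1/2" "0 < \<delta>" "slowly_varying L"
      and "\<forall>x\<ge>0. prob {\<omega> \<in> space M. x \<le> real (v \<omega>)} = L x * exp (- \<delta> * x powr \<beta>)"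
    then interpret weibull_tail q T p L \<beta> \<delta>
      by unfold_locales (auto simp: q_def)
    show ?thesis by (rule thinned_tail_ratio)
  qed
  then show ?thesis by (simp add: T_def q_def)
qed

end
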